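(* Let $n\ge 4$ and let $S_{n-3,1}$ be the tree on $n$ vertices consisting of a vertex $u$ adjacent to $n-3$ leaves and to one further vertex $w$ of degree $2$ whose other neighbor is a leaf. Then $\rho_{ABC}(S_{n-3,1})>\sqrt{n-3.5}$.
   Context: For a simple connected graph $G$ with vertex set $\{v_1,\dots,v_n\}$ and degrees $d_i$, the ABC matrix is $M(G)=(m_{ij})_{n\times n}$ with $m_{ij}=\sqrt{(d_i+d_j-2)/(d_id_j)}$ if $v_iv_j$ is an edge and $m_{ij}=0$ otherwise. The ABC spectral radius $\rho_{ABC}(G)$ is the largest eigenvalue of $M(G)$. *)

theory Defs
  imports "Jordan_Normal_Form.Char_Poly"
begin

text \<open>Simple graphs on vertex set {0..<n}, given by a symmetric irreflexive edge relation E.\<close>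

definition deg :: "nat \<Rightarrow> (nat \<Rightarrow> nat \<Rightarrow> bool) \<Rightarrow> nat \<Rightarrow> nat" where
  "deg n E i = card {j. j < n \<and> E i j}"

definition abc_matrix :: "nat \<Rightarrow> (nat \<Rightarrow> nat \<Rightarrow> bool) \<Rightarrow> real mat" where
  "abc_matrix n E = mat n n (\<lambda>(i, j).
     if E i j then sqrt ((real (deg n E i) + real (deg n E j) - 2) / (real (deg n E i) * real (deg n E j)))
     else 0)"

definition abc_spectral_radius :: "nat \<Rightarrow> (nat \<Rightarrow> nat \<Rightarrow> bool) \<Rightarrow> real" where
  "abc_spectral_radius n E = Max {r. eigenvalue (abc_matrix n E) r}"

text \<open>The tree S_{n-3,1}: vertex 0 = u, vertex 1 = w, vertex 2 = the leaf adjacent to w,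
  vertices 3..n-1 are the n-3 leaves adjacent to u.\<close>
definition S_tree_edge :: "nat \<Rightarrow> nat \<Rightarrow> nat \<Rightarrow> bool" where
  "S_tree_edge n i j = (i < n \<and> j < n \<and>
     ({i, j} = {0, 1} \<or> {i, j} = {1, 2} \<or> (\<exists>k. 3 \<le> k \<and> k < n \<and> {i, j} = {0, k})))"

end

theory Submission
  imports Defs
begin

text \<open>With weights \<open>p = \<surd>(1/2)\<close> on the two edges at \<open>w\<close> and \<open>q = \<surd>((n-3)/(n-2))\<close> on
  the \<open>n-3\<close> pendant edges at \<open>u\<close>, \<open>\<surd>t\<close> is an eigenvalue, with an eigenvector constant
  on those leaves, whenever \<open>t > 0\<close> solves \<open>t\<^sup>2 - (2p\<^sup>2 + (n-3)q\<^sup>2) t + (n-3)p\<^sup>2q\<^sup>2 = 0\<close>, i.e.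
  \<open>t\<^sup>2 - (1+c) t + c/2 = 0\<close> with \<open>c = (n-3)\<^sup>2/(n-2) > n - 4\<close>. Its larger root satisfies
  \<open>t > c + 1/2 > n - 3.5\<close>.\<close>

lemma finite_eigenvalues:
  fixes A :: "'a :: field mat"
  assumes A: "A \<in> carrier_mat n n"
  shows "finite {r. eigenvalue A r}"
proof -
  have "char_poly A \<noteq> 0" using degree_monic_char_poly[OF A] by auto
  then have "finite {r. poly (char_poly A) r = 0}" by (rule poly_roots_finite)
  then show ?thesis using eigenvalue_root_char_poly[OF A] by simp
qed

lemma eigenvalue_le_abc_spectral_radius:
  assumes "eigenvalue (abc_matrix n E) r"
  shows "r \<le> abc_spectral_radius n E"
proof -
  have "abc_matrix n E \<in> carrier_mat n n" by (simp add: abc_matrix_def)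
  then show ?thesis
    unfolding abc_spectral_radius_def using assms finite_eigenvalues by (intro Max_ge) auto
qed

lemma mult_mat_vec_index_supported:
  assumes "A \<in> carrier_mat n n" "v \<in> carrier_vec n" "i < n" "S \<subseteq> {..<n}"
    and "\<And>j. j < n \<Longrightarrow> j \<notin> S \<Longrightarrow> A $$ (i, j) = 0"
  shows "(A *\<^sub>v v) $ i = (\<Sum>j\<in>S. A $$ (i, j) * v $ j)"
proof -
  have "(A *\<^sub>v v) $ i = (\<Sum>j<n. A $$ (i, j) * v $ j)"
    using assms(1-3) by (simp add: scalar_prod_def atLeast0LessThan)
  also have "\<dots> = (\<Sum>j\<in>S. A $$ (i, j) * v $ j)"
    using assms(4,5) by (intro sum.mono_neutral_right) auto
  finally show ?thesis .
qed

lemma S_tree_edge_iff: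
  "S_tree_edge n i j \<longleftrightarrow> i < n \<and> j < n \<and>
     ((i = 0 \<and> j = 1) \<or> (i = 1 \<and> j = 0) \<or> (i = 1 \<and> j = 2) \<or> (i = 2 \<and> j = 1)
      \<or> (i = 0 \<and> 3 \<le> j) \<or> (j = 0 \<and> 3 \<le> i))"
  unfolding S_tree_edge_def by (auto simp: doubleton_eq_iff)

lemma S_tree_neighbours:
  assumes "n \<ge> 3" "i < n"
  shows "{j. j < n \<and> S_tree_edge n i j} =
    (if i = 0 then insert 1 {3..<n} else if i = 1 then {0, 2} else if i = 2 then {1} else {0})"
  using assms by (auto simp: S_tree_edge_iff)

lemma deg_S_tree:
  assumes "n \<ge> 3" "i < n"
  shows "deg n (S_tree_edge n) i = (if i = 0 then n - 2 else if i = 1 then 2 else 1)"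
  using assms unfolding deg_def S_tree_neighbours[OF assms] by auto

definition weighted_S_tree_matrix :: "nat \<Rightarrow> real \<Rightarrow> real \<Rightarrow> real mat" where
  "weighted_S_tree_matrix n p q = mat n n (\<lambda>(i, j).
     if S_tree_edge n i j then if i < 3 \<and> j < 3 then p else q else 0)"

lemma abc_matrix_S_tree:
  assumes "n \<ge> 4"
  shows "abc_matrix n (S_tree_edge n) =
    weighted_S_tree_matrix n (sqrt (1/2)) (sqrt ((real n - 3) / (real n - 2)))"
    (is "_ = ?W")
proof (rule eq_matI)
  fix i j assume "i < dim_row ?W" "j < dim_col ?W"
  then have "i < n" "j < n" by (auto simp: weighted_S_tree_matrix_def)
  moreover have "real (n - 2) = real n - 2" using assms by simp
  moreover have "(real n - 2 + 2 - 2) / ((real n - 2) * 2) = 1/2" using assms by (simp add: field_simps)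
  ultimately show "abc_matrix n (S_tree_edge n) $$ (i, j) = ?W $$ (i, j)"
    using assms
    by (auto simp: abc_matrix_def weighted_S_tree_matrix_def S_tree_edge_iff deg_S_tree mult.commute)
qed (auto simp: abc_matrix_def weighted_S_tree_matrix_def)

lemma eigenvalue_weighted_S_tree_matrix:
  assumes n: "n \<ge> 3" and p: "p \<noteq> 0" and t: "t > 0"
    and quadratic: "t\<^sup>2 - (2 * p\<^sup>2 + (real n - 3) * q\<^sup>2) * t + (real n - 3) * p\<^sup>2 * q\<^sup>2 = 0"
  shows "eigenvalue (weighted_S_tree_matrix n p q) (sqrt t)"
proof -
  define M where "M = weighted_S_tree_matrix n p q"
  define r where "r = sqrt t"
  have r2: "r * r = t" using t by (simp add: r_def)
  have r0: "r \<noteq> 0" using t by (simp add: r_def)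
  \<comment> \<open>Solve the eigen-equations at the leaves of \<open>u\<close>, at the leaf of \<open>w\<close> and at \<open>w\<close>; the one at \<open>u\<close> is the quadratic.\<close>
  define v where "v = vec n (\<lambda>i. if i = 0 then r * (t - p\<^sup>2) else if i = 1 then p * t
    else if i = 2 then p\<^sup>2 * r else q * (t - p\<^sup>2))"
  have M: "M \<in> carrier_mat n n" and v: "v \<in> carrier_vec n"
    by (simp_all add: M_def weighted_S_tree_matrix_def v_def)
  have "v $ 2 \<noteq> 0" using n p r0 by (simp add: v_def)
  then have "v \<noteq> 0\<^sub>v n" using n by auto
  moreover have "M *\<^sub>v v = r \<cdot>\<^sub>v v"
  proof (rule eq_vecI)
    fix i assume "i < dim_vec (r \<cdot>\<^sub>v v)"
    then have i: "i < n" using v by simp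
    have row: "(M *\<^sub>v v) $ i = (\<Sum>j\<in>{j. j < n \<and> S_tree_edge n i j}. M $$ (i, j) * v $ j)"
      using M v i by (intro mult_mat_vec_index_supported) (auto simp: M_def weighted_S_tree_matrix_def)
    consider "i = 0" | "i = 1" | "i = 2" | "3 \<le> i" by linarith
    then show "(M *\<^sub>v v) $ i = (r \<cdot>\<^sub>v v) $ i"
    proof cases
      case 1
      have "(\<Sum>j\<in>{3..<n}. M $$ (0, j) * v $ j) = (\<Sum>j\<in>{3..<n}. q * (q * (t - p\<^sup>2)))"
        by (intro sum.cong) (auto simp: M_def weighted_S_tree_matrix_def v_def S_tree_edge_iff)
      then have leaves: "(\<Sum>j\<in>{3..<n}. M $$ (0, j) * v $ j) = (real n - 3) * (q * (q * (t - p\<^sup>2)))"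
        using n by (simp add: of_nat_diff)
      have "(M *\<^sub>v v) $ i = M $$ (0, 1) * v $ 1 + (\<Sum>j\<in>{3..<n}. M $$ (0, j) * v $ j)"
        using row 1 S_tree_neighbours[OF n i] by simp
      also have "\<dots> = p * (p * t) + (real n - 3) * (q * (q * (t - p\<^sup>2)))"
        unfolding leaves using n by (simp add: M_def weighted_S_tree_matrix_def v_def S_tree_edge_iff)
      also have "\<dots> = t * (t - p\<^sup>2)"
        using quadratic by (simp add: power2_eq_square algebra_simps)
      finally show ?thesis using 1 i r2 by (simp add: v_def)
    next
      case 2
      have "(M *\<^sub>v v) $ i = M $$ (1, 0) * v $ 0 + M $$ (1, 2) * v $ 2"
        using row 2 S_tree_neighbours[OF n i] by simp
      then show ?thesis using 2 n r2
        by (simp add: M_def weighted_S_tree_matrix_def v_def S_tree_edge_iff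
          power2_eq_square algebra_simps)
    next
      case 3
      have "(M *\<^sub>v v) $ i = M $$ (2, 1) * v $ 1"
        using row 3 S_tree_neighbours[OF n i] by simp
      then show ?thesis using 3 n r2
        by (simp add: M_def weighted_S_tree_matrix_def v_def S_tree_edge_iff
          power2_eq_square algebra_simps)
    next
      case 4
      have "(M *\<^sub>v v) $ i = M $$ (i, 0) * v $ 0"
        using row 4 S_tree_neighbours[OF n i] by simp
      then show ?thesis using 4 n i
        by (simp add: M_def weighted_S_tree_matrix_def v_def S_tree_edge_iff algebra_simps)
    qed
  qed (simp add: M_def weighted_S_tree_matrix_def v_def)
  ultimately show ?thesis
    unfolding eigenvalue_def eigenvector_def M_def r_def using v M M_def by auto
qed

theorem lemma3p3:
  fixes n :: nat
  assumes "n \<ge> 4"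
  shows "abc_spectral_radius n (S_tree_edge n) > sqrt (real n - 3.5)"
proof -
  define c where "c = (real n - 3)\<^sup>2 / (real n - 2)"
  define t where "t = (1 + c + sqrt (1 + c\<^sup>2)) / 2"
  have c: "c = real n - 4 + 1 / (real n - 2)"
    using assms by (simp add: c_def field_simps power2_eq_square)
  have "c < sqrt (1 + c\<^sup>2)"
    using real_sqrt_less_mono[of "c\<^sup>2" "1 + c\<^sup>2"] by simp
  then have "t > c + 1/2" by (simp add: t_def)
  moreover have "c > real n - 4" using assms by (simp add: c)
  ultimately have t_gt: "t > real n - 3.5" by simp
  define q where "q = sqrt ((real n - 3) / (real n - 2))"
  have q: "(real n - 3) * q\<^sup>2 = c"
    using assms by (simp add: q_def c_def power2_eq_square)
  have "t\<^sup>2 - (1 + c) * t + c / 2 = 0"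
    by (simp add: t_def field_simps power2_eq_square)
  then have "t\<^sup>2 - (2 * (sqrt (1/2))\<^sup>2 + (real n - 3) * q\<^sup>2) * t
      + (real n - 3) * (sqrt (1/2))\<^sup>2 * q\<^sup>2 = 0"
    by (simp add: q mult.commute[of _ "1/2"] mult.assoc[symmetric])
  then have "eigenvalue (abc_matrix n (S_tree_edge n)) (sqrt t)"
    unfolding abc_matrix_S_tree[OF assms] q_def[symmetric] using assms t_gt
    by (intro eigenvalue_weighted_S_tree_matrix) auto
  then have "sqrt t \<le> abc_spectral_radius n (S_tree_edge n)"
    by (rule eigenvalue_le_abc_spectral_radius)
  moreover have "sqrt (real n - 3.5) < sqrt t" using t_gt by simp
  ultimately show ?thesis by linarith
qed

end
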